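(* Let $s \geq 3$ and let $\mathcal{C} = \mathcal{C}_0 \cup \mathcal{C}_1 \cup \cdots \cup \mathcal{C}_{s-2}$ be an $(s-1)$-tiling of $Q_n$. Let $C \in \mathcal{C}_\ell$ be a level $\ell$ cube of codimension $d$. Then for each $\rho \in \{1, \ldots, \ell\}$ and each $\ell' \in \{1, \ldots, s-2\}$, the number of cubes $C' \in \mathcal{C}_{\ell'}$ of codimension at most $d$ which are $\rho$-adjacent to $C$ is at most $d_\rho(C)$.
   Context: $Q_n$ is the hypercube on $\{0,1\}^n$. Subcubes are represented by vectors in $\{0,1,*\}^n$; a special cube is one of the form $(a_1,\dots,a_d,*,\dots,* )$, with codimension $d(C)=d$. Two disjoint cubes are adjacent if they contain vertices adjacent in $Q_n$. A tiling of $Q_n$ is a collection of pairwise disjoint special cubes covering $\{0,1\}^n$. An $(s-1)$-tiling is a sequence of tilings $\mathcal{C}_0, \mathcal{C}_1, \ldots, \mathcal{C}_{s-2}$ where $\mathcal{C}_0 = \{Q_n\}$ and, for $\ell \geq 1$, every cube of $\mathcal{C}_\ell$ is contained in some cube of $\mathcal{C}_{\ell-1}$; cubes of $\mathcal{C}_\ell$ are called level $\ell$ cubes. For a level $\ell$ cube $C$ and $0 \le i \le \ell$, let $C^{(i)}$ be the unique level $i$ cube containing $C$ (so $C^{(0)}=Q_n$, $C^{(\ell)}=C$); the $i$-codimension of $C$ is $d_i(C) = d(C^{(i)}) - d(C^{(i-1)})$ for $1 \leq i \leq \ell$, so $d(C)=\sum_{i\le \ell} d_i(C)$. For two adjacent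 cubes $C, C'$ of the $(s-1)$-tiling, their level of adjacency $\rho(C,C')$ is the minimum $i$ such that the level $i$ cubes containing $C$ and $C'$ are distinct; $C$ and $C'$ are called $\rho$-adjacent if $\rho(C,C')=\rho$. *)

theory Defs
  imports Main
begin

text \<open>Vertices of Q_n are boolean lists of length n. A special cube
(a_1,...,a_d,*,...,*) is represented by its prefix, a boolean list of length d \<le> n;
its codimension is the length of the list.\<close>

definition cube_verts :: "nat \<Rightarrow> bool list \<Rightarrow> bool list set" where
  "cube_verts n a = {x. length x = n \<and> take (length a) x = a}"

definition codim :: "bool list \<Rightarrow> nat" where
  "codim a = length a"

definition hypercube_adj :: "nat \<Rightarrow> bool list \<Rightarrow> bool list \<Rightarrow> bool" where
  "hypercube_adj n x y \<longleftrightarrow> length x = n \<and> length y = n \<and>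
     card {i. i < n \<and> x ! i \<noteq> y ! i} = 1"

definition cubes_adjacent :: "nat \<Rightarrow> bool list \<Rightarrow> bool list \<Rightarrow> bool" where
  "cubes_adjacent n a b \<longleftrightarrow> cube_verts n a \<inter> cube_verts n b = {} \<and>
     (\<exists>x\<in>cube_verts n a. \<exists>y\<in>cube_verts n b. hypercube_adj n x y)"

definition is_tiling :: "nat \<Rightarrow> bool list set \<Rightarrow> bool" where
  "is_tiling n T \<longleftrightarrow> (\<forall>a\<in>T. length a \<le> n) \<and>
     (\<forall>a\<in>T. \<forall>b\<in>T. a \<noteq> b \<longrightarrow> cube_verts n a \<inter> cube_verts n b = {}) \<and>
     (\<Union>a\<in>T. cube_verts n a) = {x. length x = n}"

text \<open>An (s-1)-tiling: tilings Cs 0, ..., Cs (s-2) with Cs 0 = {Q_n}, refining.\<close>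
definition is_multi_tiling :: "nat \<Rightarrow> nat \<Rightarrow> (nat \<Rightarrow> bool list set) \<Rightarrow> bool" where
  "is_multi_tiling n s Cs \<longleftrightarrow> Cs 0 = {[]} \<and>
     (\<forall>l\<le>s-2. is_tiling n (Cs l)) \<and>
     (\<forall>l. 1 \<le> l \<and> l \<le> s-2 \<longrightarrow>
        (\<forall>c\<in>Cs l. \<exists>c'\<in>Cs (l-1). cube_verts n c \<subseteq> cube_verts n c'))"

definition anc :: "nat \<Rightarrow> (nat \<Rightarrow> bool list set) \<Rightarrow> nat \<Rightarrow> bool list \<Rightarrow> bool list" where
  "anc n Cs i c = (THE a. a \<in> Cs i \<and> cube_verts n c \<subseteq> cube_verts n a)"

definition icodim :: "nat \<Rightarrow> (nat \<Rightarrow> bool list set) \<Rightarrow> nat \<Rightarrow> bool list \<Rightarrow> nat" where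
  "icodim n Cs i c = codim (anc n Cs i c) - codim (anc n Cs (i - 1) c)"

definition adj_level :: "nat \<Rightarrow> (nat \<Rightarrow> bool list set) \<Rightarrow> nat \<Rightarrow> bool list \<Rightarrow> nat \<Rightarrow> bool list \<Rightarrow> nat" where
  "adj_level n Cs l c l' c' = (LEAST i. i \<le> min l l' \<and> anc n Cs i c \<noteq> anc n Cs i c')"

definition rho_adjacent :: "nat \<Rightarrow> (nat \<Rightarrow> bool list set) \<Rightarrow> nat \<Rightarrow> bool list \<Rightarrow> nat \<Rightarrow> bool list \<Rightarrow> nat \<Rightarrow> bool" where
  "rho_adjacent n Cs l c l' c' \<rho> \<longleftrightarrow> cubes_adjacent n c c' \<and> adj_level n Cs l c l' c' = \<rho>"

end

theory Submission
  imports Defs "HOL-Library.Sublist"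
begin

(* Two such cubes are disjoint iff their prefixes
   disagree in a common coordinate; diff_pos a b is the set of these coordinates.
   Adjacent cubes disagree in exactly one coordinate, since adjacent vertices do.

   For C' rho-adjacent to C, let
   P = C^(rho-1) and A = C^(rho): P is also the level rho-1 ancestor of C',
   while the level rho ancestors A and B of C and C' are distinct, hence
   disjoint, tiles.  So the unique coordinate j where C and C' disagree lies
   beyond the common prefix P and is a coordinate where A and B disagree, i.e.
   |P| <= j < |A|.  Two cubes of one tiling, of codimension at most d(C), that
   disagree with C exactly at the same coordinate are equal.  Hence C' |-> j
   injects the counted cubes into an interval of length |A| - |P| = d_rho(C). *)

section \<open>Special cubes as prefixes\<close>

lemma cube_verts_iff_prefix: "x \<in> cube_verts n a \<longleftrightarrow> length x = n \<and> prefix a x"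
proof -
  have "take (length a) x = a \<longleftrightarrow> prefix a x"
    by (metis append_eq_conv_conj prefix_def)
  then show ?thesis by (simp add: cube_verts_def)
qed

lemma prefix_nth: "prefix a b \<Longrightarrow> i < length a \<Longrightarrow> b ! i = a ! i"
  by (auto simp: prefix_def nth_append)

text \<open>Cubes of codimension at most n are nonempty; we use two explicit vertices.\<close>
lemma cube_verts_witness: "length a \<le> n \<Longrightarrow> a @ replicate (n - length a) v \<in> cube_verts n a"
  by (simp add: cube_verts_def)

lemma cube_verts_length: "x \<in> cube_verts n a \<Longrightarrow> length a \<le> n"
  by (metis cube_verts_iff_prefix prefix_length_le)

lemma cube_verts_subset_prefix:
  assumes "length a \<le> n" and "cube_verts n a \<subseteq> cube_verts n b"
  shows "prefix b a"
proof -
  let ?x = "\<lambda>v. a @ replicate (n - length a) v"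
  have x: "prefix b (?x v)" for v
    using assms cube_verts_witness cube_verts_iff_prefix by blast
  have "\<not> length a < length b"
  proof
    assume less: "length a < length b"
    then have "?x False ! length a = ?x True ! length a"
      using prefix_nth x by metis
    moreover have "length a < n"
      using less prefix_length_le[OF x] by fastforce
    ultimately show False by (simp add: nth_append)
  qed
  then show ?thesis
    using prefix_length_prefix[OF x[of False] _] by (simp add: not_less)
qed

definition diff_pos :: "bool list \<Rightarrow> bool list \<Rightarrow> nat set" where
  "diff_pos a b = {i. i < length a \<and> i < length b \<and> a ! i \<noteq> b ! i}"

lemma diff_pos_sym: "diff_pos a b = diff_pos b a"
  unfolding diff_pos_def by auto

lemma diff_pos_empty_prefix:
  assumes "diff_pos a b = {}" and "length a \<le> length b"
  shows "prefix a b"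
proof -
  have "take (length a) b = a"
    using assms by (intro nth_equalityI) (auto simp: diff_pos_def)
  then show ?thesis by (metis take_is_prefix)
qed

lemma cube_verts_disjoint_iff:
  assumes "length a \<le> n" and "length b \<le> n"
  shows "cube_verts n a \<inter> cube_verts n b = {} \<longleftrightarrow> diff_pos a b \<noteq> {}"
proof
  assume disjoint: "cube_verts n a \<inter> cube_verts n b = {}"
  show "diff_pos a b \<noteq> {}"
  proof
    assume empty: "diff_pos a b = {}"
    have "prefix a b \<or> prefix b a"
      using diff_pos_empty_prefix[of a b] diff_pos_empty_prefix[of b a] empty diff_pos_sym
      by (metis nle_le)
    then have "cube_verts n b \<subseteq> cube_verts n a \<or> cube_verts n a \<subseteq> cube_verts n b"
      by (auto simp: cube_verts_iff_prefix dest: prefix_order.trans)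
    then show False
      using disjoint cube_verts_witness[OF assms(1)] cube_verts_witness[OF assms(2)] by blast
  qed
next
  assume "diff_pos a b \<noteq> {}"
  then obtain i where "i < length a" "i < length b" "a ! i \<noteq> b ! i"
    by (auto simp: diff_pos_def)
  then show "cube_verts n a \<inter> cube_verts n b = {}"
    by (auto simp: cube_verts_iff_prefix) (metis prefix_nth)+
qed

text \<open>Adjacent cubes disagree in exactly one coordinate, inherited from an edge of Q_n.\<close>
lemma adjacent_diff_pos_singleton:
  assumes "cubes_adjacent n a b"
  obtains j where "diff_pos a b = {j}"
proof -
  obtain x y where x: "x \<in> cube_verts n a" and y: "y \<in> cube_verts n b"
    and xy: "hypercube_adj n x y"
    using assms unfolding cubes_adjacent_def by blast
  have "diff_pos a b \<noteq> {}"
    using assms cube_verts_disjoint_iff cube_verts_length[OF x] cube_verts_length[OF y]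
    unfolding cubes_adjacent_def by blast
  then obtain j where j: "j \<in> diff_pos a b" by blast
  have "diff_pos a b \<subseteq> {i. i < n \<and> x ! i \<noteq> y ! i}"
    using x y cube_verts_length[OF y]
    by (auto simp: diff_pos_def cube_verts_iff_prefix prefix_nth)
  then have "card (diff_pos a b) \<le> 1"
    using xy card_mono[of "{i. i < n \<and> x ! i \<noteq> y ! i}"] unfolding hypercube_adj_def by force
  then have "diff_pos a b = {j}"
    using j card_le_Suc0_iff_eq[of "diff_pos a b"] by (auto simp: diff_pos_def)
  then show ?thesis by (rule that)
qed

lemma diff_pos_prefix_mono: "prefix a' a \<Longrightarrow> prefix b' b \<Longrightarrow> diff_pos a' b' \<subseteq> diff_pos a b"
proof
  fix i assume "i \<in> diff_pos a' b'" and "prefix a' a" and "prefix b' b"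
  then show "i \<in> diff_pos a b"
    using prefix_length_le[of a' a] prefix_length_le[of b' b] prefix_nth[of a' a i] prefix_nth[of b' b i]
    by (auto simp: diff_pos_def)
qed

lemma diff_pos_beyond_common_prefix:
  "prefix p a \<Longrightarrow> prefix p b \<Longrightarrow> i \<in> diff_pos a b \<Longrightarrow> length p \<le> i"
  unfolding diff_pos_def using prefix_nth[of p a i] prefix_nth[of p b i] by force

text \<open>Over the boolean alphabet, two cubes at most as fine as a that each disagree
  with a in the single coordinate j agree with each other everywhere.\<close>
lemma diff_pos_same_coordinate:
  assumes "diff_pos a b = {j}" and "diff_pos a c = {j}"
    and "length b \<le> length a" and "length c \<le> length a"
  shows "diff_pos b c = {}"
proof (rule ccontr)
  assume "diff_pos b c \<noteq> {}"
  then obtain i where i: "i < length b" "i < length c" "b ! i \<noteq> c ! i"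
    by (auto simp: diff_pos_def)
  then have "i \<in> diff_pos a b \<or> i \<in> diff_pos a c"
    using assms(3,4) by (auto simp: diff_pos_def)
  then have "i \<in> diff_pos a b" and "i \<in> diff_pos a c"
    using assms(1,2) by auto
  then show False
    using i(3) by (auto simp: diff_pos_def)
qed

section \<open>Tilings and ancestors\<close>

lemma tiling_cube_length: "is_tiling n T \<Longrightarrow> a \<in> T \<Longrightarrow> length a \<le> n"
  by (simp add: is_tiling_def)

text \<open>Distinct tiles are disjoint, so they disagree in some coordinate.\<close>
lemma tiling_eq_if_diff_pos_empty:
  assumes "is_tiling n T" and "a \<in> T" and "b \<in> T" and "diff_pos a b = {}"
  shows "a = b"
  using assms cube_verts_disjoint_iff[of a n b] tiling_cube_length
  unfolding is_tiling_def by blast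

text \<open>The injectivity step: a tile is determined by its single coordinate of
  disagreement with a cube a that is at least as fine.\<close>
lemma tiling_same_coordinate:
  assumes "is_tiling n T" and "c1 \<in> T" and "c2 \<in> T"
    and "diff_pos a c1 = {j}" and "diff_pos a c2 = {j}"
    and "length c1 \<le> length a" and "length c2 \<le> length a"
  shows "c1 = c2"
  using tiling_eq_if_diff_pos_empty[OF assms(1-3) diff_pos_same_coordinate[OF assms(4-7)]] .

lemma multi_tiling_level: "is_multi_tiling n s Cs \<Longrightarrow> i \<le> s - 2 \<Longrightarrow> is_tiling n (Cs i)"
  by (simp add: is_multi_tiling_def)

lemma multi_tiling_containing_cube:
  assumes "is_multi_tiling n s Cs" and "i \<le> l" and "l \<le> s - 2" and "C \<in> Cs l"
  shows "\<exists>a\<in>Cs i. cube_verts n C \<subseteq> cube_verts n a"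
  using assms(2-4)
proof (induction l arbitrary: C rule: dec_induct)
  case base
  then show ?case by blast
next
  case (step k)
  have "1 \<le> Suc k" and "Suc k \<le> s - 2"
    using step.prems(1) by simp_all
  then obtain c where c: "c \<in> Cs k" and sub: "cube_verts n C \<subseteq> cube_verts n c"
    using assms(1) step.prems(2) unfolding is_multi_tiling_def
    by (metis diff_Suc_1)
  then obtain a where "a \<in> Cs i" and "cube_verts n c \<subseteq> cube_verts n a"
    using step.IH[OF _ c] step.prems(1) by auto
  then show ?case
    using sub by blast
qed

lemma anc_spec:
  assumes "is_multi_tiling n s Cs" and "i \<le> l" and "l \<le> s - 2" and "C \<in> Cs l"
  shows "anc n Cs i C \<in> Cs i" and "cube_verts n C \<subseteq> cube_verts n (anc n Cs i C)"
proof -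
  have level: "is_tiling n (Cs i)"
    using multi_tiling_level[OF assms(1)] assms(2,3) by simp
  have "cube_verts n C \<noteq> {}"
    using cube_verts_witness tiling_cube_length multi_tiling_level[OF assms(1,3)] assms(4) by blast
  then have unique: "b = a" if "a \<in> Cs i" "cube_verts n C \<subseteq> cube_verts n a"
    and "b \<in> Cs i" "cube_verts n C \<subseteq> cube_verts n b" for a b
    using that level unfolding is_tiling_def by blast
  obtain a where "a \<in> Cs i" and "cube_verts n C \<subseteq> cube_verts n a"
    using multi_tiling_containing_cube[OF assms] by blast
  then have "anc n Cs i C = a"
    unfolding anc_def using unique by (intro the_equality) blast+
  with \<open>a \<in> Cs i\<close> \<open>cube_verts n C \<subseteq> _\<close>
  show "anc n Cs i C \<in> Cs i" and "cube_verts n C \<subseteq> cube_verts n (anc n Cs i C)"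
    by simp_all
qed

lemma anc_prefix:
  assumes "is_multi_tiling n s Cs" and "i \<le> l" and "l \<le> s - 2" and "C \<in> Cs l"
  shows "prefix (anc n Cs i C) C"
  using cube_verts_subset_prefix anc_spec(2)[OF assms]
    tiling_cube_length[OF multi_tiling_level[OF assms(1,3)] assms(4)] by blast

lemma anc_self:
  assumes "is_multi_tiling n s Cs" and "l \<le> s - 2" and "C \<in> Cs l"
  shows "anc n Cs l C = C"
proof -
  have "diff_pos (anc n Cs l C) C = {}"
    using anc_prefix[OF assms(1) order.refl assms(2,3)] by (auto simp: diff_pos_def prefix_nth)
  then show ?thesis
    using tiling_eq_if_diff_pos_empty multi_tiling_level[OF assms(1,2)]
      anc_spec(1)[OF assms(1) order.refl assms(2,3)] assms(3) by blast
qed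

section \<open>Level of adjacency\<close>

text \<open>Disjoint cubes have distinct ancestors at the coarser of their two levels,
  so the level of adjacency is well defined.\<close>
lemma disjoint_cubes_top_ancestors_differ:
  assumes "is_multi_tiling n s Cs"
    and "l \<le> s - 2" and "C \<in> Cs l" and "l' \<le> s - 2" and "C' \<in> Cs l'"
    and "cube_verts n C \<inter> cube_verts n C' = {}"
  shows "anc n Cs (min l l') C \<noteq> anc n Cs (min l l') C'"
proof
  assume eq: "anc n Cs (min l l') C = anc n Cs (min l l') C'"
  have nonempty: "cube_verts n C \<noteq> {}" "cube_verts n C' \<noteq> {}"
    using cube_verts_witness tiling_cube_length multi_tiling_level[OF assms(1)] assms(2-5) by blast+
  show False
  proof (cases "l \<le> l'")
    case True
    then have "cube_verts n C' \<subseteq> cube_verts n C"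
      using eq anc_self[OF assms(1-3)] anc_spec(2)[OF assms(1) True assms(4,5)] by (simp add: min_def)
    then show False using assms(6) nonempty by blast
  next
    case False
    then have "cube_verts n C \<subseteq> cube_verts n C'"
      using eq anc_self[OF assms(1,4,5)] anc_spec(2)[OF assms(1) _ assms(2,3), of l'] by (simp add: min_def)
    then show False using assms(6) nonempty by blast
  qed
qed

lemma rho_adjacent_ancestors:
  assumes "is_multi_tiling n s Cs"
    and "l \<le> s - 2" and "C \<in> Cs l" and "l' \<le> s - 2" and "C' \<in> Cs l'"
    and "1 \<le> \<rho>" and "rho_adjacent n Cs l C l' C' \<rho>"
  shows "\<rho> \<le> l'" and "anc n Cs (\<rho> - 1) C' = anc n Cs (\<rho> - 1) C"
    and "anc n Cs \<rho> C \<noteq> anc n Cs \<rho> C'"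
proof -
  let ?differ = "\<lambda>i. i \<le> min l l' \<and> anc n Cs i C \<noteq> anc n Cs i C'"
  have level: "(LEAST i. ?differ i) = \<rho>"
    using assms(7) unfolding rho_adjacent_def adj_level_def by simp
  have "?differ (min l l')"
    using disjoint_cubes_top_ancestors_differ[OF assms(1-5)] assms(7)
    unfolding rho_adjacent_def cubes_adjacent_def by simp
  then have "?differ \<rho>"
    unfolding level[symmetric] by (rule LeastI)
  moreover have "\<not> ?differ (\<rho> - 1)"
    using not_less_Least[of "\<rho> - 1" ?differ] level assms(6) by simp
  ultimately show "\<rho> \<le> l'" and "anc n Cs (\<rho> - 1) C' = anc n Cs (\<rho> - 1) C"
    and "anc n Cs \<rho> C \<noteq> anc n Cs \<rho> C'"
    by auto
qed

lemma rho_adjacent_coordinate: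
  assumes "is_multi_tiling n s Cs"
    and "l \<le> s - 2" and "C \<in> Cs l" and "l' \<le> s - 2" and "C' \<in> Cs l'"
    and "1 \<le> \<rho>" and "\<rho> \<le> l" and "rho_adjacent n Cs l C l' C' \<rho>"
  obtains j where "diff_pos C C' = {j}"
    and "length (anc n Cs (\<rho> - 1) C) \<le> j" and "j < length (anc n Cs \<rho> C)"
proof -
  note anc = rho_adjacent_ancestors[OF assms(1-6,8)]
  obtain j where j: "diff_pos C C' = {j}"
    using adjacent_diff_pos_singleton assms(8) unfolding rho_adjacent_def by blast
  have "prefix (anc n Cs (\<rho> - 1) C) C" and "prefix (anc n Cs (\<rho> - 1) C) C'"
    using anc_prefix[OF assms(1) _ assms(2,3)] anc_prefix[OF assms(1) _ assms(4,5)] anc(1,2) assms(7)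
    by (metis diff_le_self order_trans)+
  then have "length (anc n Cs (\<rho> - 1) C) \<le> j"
    using diff_pos_beyond_common_prefix j by blast
  moreover have "j \<in> diff_pos (anc n Cs \<rho> C) (anc n Cs \<rho> C')"
  proof -
    have "is_tiling n (Cs \<rho>)"
      using multi_tiling_level[OF assms(1)] assms(2,7) by simp
    then have "diff_pos (anc n Cs \<rho> C) (anc n Cs \<rho> C') \<noteq> {}"
      using tiling_eq_if_diff_pos_empty anc(3) anc_spec(1)[OF assms(1) _ assms(2,3)]
        anc_spec(1)[OF assms(1) _ assms(4,5)] anc(1) assms(7) by blast
    moreover have "diff_pos (anc n Cs \<rho> C) (anc n Cs \<rho> C') \<subseteq> {j}"
      using diff_pos_prefix_mono anc_prefix[OF assms(1) assms(7) assms(2,3)]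
        anc_prefix[OF assms(1) anc(1) assms(4,5)] j by metis
    ultimately show ?thesis by blast
  qed
  then have "j < length (anc n Cs \<rho> C)"
    by (simp add: diff_pos_def)
  ultimately show ?thesis
    using that j by blast
qed

theorem proposition4p4:
  fixes n s l l' \<rho> :: nat and Cs :: "nat \<Rightarrow> bool list set" and C :: "bool list"
  assumes "s \<ge> 3"
    and "is_multi_tiling n s Cs"
    and "l \<le> s - 2" and "C \<in> Cs l"
    and "1 \<le> \<rho>" and "\<rho> \<le> l"
    and "1 \<le> l'" and "l' \<le> s - 2"
  shows "card {C' \<in> Cs l'. codim C' \<le> codim C \<and> rho_adjacent n Cs l C l' C' \<rho>}
           \<le> icodim n Cs \<rho> C"
proof -
  define S where "S = {C' \<in> Cs l'. codim C' \<le> codim C \<and> rho_adjacent n Cs l C l' C' \<rho>}"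
  define J where "J = {length (anc n Cs (\<rho> - 1) C)..<length (anc n Cs \<rho> C)}"
  define coord where "coord C' = the_elem (diff_pos C C')" for C'
  have coord: "diff_pos C C' = {coord C'}" and "coord C' \<in> J" if "C' \<in> S" for C'
    using rho_adjacent_coordinate[OF assms(2-4,8) _ assms(5,6)] that
    unfolding S_def J_def coord_def by (metis (no_types, lifting) atLeastLessThan_iff mem_Collect_eq the_elem_eq)+
  have "inj_on coord S"
  proof (rule inj_onI)
    fix C1 C2 assume "C1 \<in> S" "C2 \<in> S" "coord C1 = coord C2"
    then show "C1 = C2"
      using tiling_same_coordinate[OF multi_tiling_level[OF assms(2,8)]] coord
      unfolding S_def codim_def by (metis (no_types, lifting) mem_Collect_eq)
  qed
  then have "card S \<le> card J"
    using card_inj_on_le \<open>\<And>C'. C' \<in> S \<Longrightarrow> coord C' \<in> J\<close> J_def by blast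
  also have "card J = icodim n Cs \<rho> C"
    unfolding J_def icodim_def codim_def by simp
  finally show ?thesis
    unfolding S_def .
qed

end
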